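(* Let $K\subset\mathbb{R}^n$ be a proper cone and let $A\in\mathbb{R}^{n\times n}$ be exponentially $K$-nonnegative, i.e. $e^{At}K\subset K$ for all $t\ge 0$. The following are equivalent: (i) $A$ has no eigenvector in $\partial K$; (ii) $e^{At}$ is $K$-irreducible for all $t\ge 0$ with the possible exception of a discrete set of times; (iii) there exists $t>0$ such that $e^{At}$ is $K$-irreducible; (iv) there does not exist a nontrivial face $F$ of $K$ such that the linear span $H_F$ of $F$ is $A$-invariant (i.e. $AH_F\subset H_F$).
   Context: A proper cone $K\subset\mathbb{R}^n$ is a nonempty set with $rK\subset K$ for all $r>0$ which is convex, pointed ($K\cap(-K)=\{0\}$), closed and has nonempty interior; $\partial K$ denotes its boundary. Write $x\ge_K y$ if $x-y\in K$. A face of $K$ is a cone $F\subseteq K$ such that $x\in F$ and $x\ge_K y\ge_K 0$ imply $y\in F$; the faces $\{0\}$ and $K$ are called trivial. $\pi(K)=\{A\in\mathbb{R}^{n\times n}: AK\subset K\}$. A matrix $A\in\pi(K)$ is $K$-irreducible if there is no nontrivial face $F$ of $K$ with $AF\subset F$. *)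

theory Defs
  imports "HOL-Analysis.Analysis"
begin

primrec matpow :: "real^'n^'n \<Rightarrow> nat \<Rightarrow> real^'n^'n" where
  "matpow A 0 = mat 1"
| "matpow A (Suc k) = A ** matpow A k"

definition mexp :: "real^'n^'n \<Rightarrow> real^'n^'n" where
  "mexp A = (\<Sum>k. (1 / fact k) *\<^sub>R matpow A k)"

definition is_cone :: "(real^'n) set \<Rightarrow> bool" where
  "is_cone K \<longleftrightarrow> K \<noteq> {} \<and> (\<forall>r>0. \<forall>x\<in>K. r *\<^sub>R x \<in> K)"

definition proper_cone :: "(real^'n) set \<Rightarrow> bool" where
  "proper_cone K \<longleftrightarrow> is_cone K \<and> convex K \<and> K \<inter> uminus ` K = {0}
     \<and> closed K \<and> interior K \<noteq> {}"

text \<open>Faces: convex subcones F of K with: x in F, x >=_K y >=_K 0 implies y in F.\<close>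
definition face :: "(real^'n) set \<Rightarrow> (real^'n) set \<Rightarrow> bool" where
  "face K F \<longleftrightarrow> is_cone F \<and> convex F \<and> F \<subseteq> K
     \<and> (\<forall>x y. x \<in> F \<and> x - y \<in> K \<and> y - 0 \<in> K \<longrightarrow> y \<in> F)"

definition nontrivial_face :: "(real^'n) set \<Rightarrow> (real^'n) set \<Rightarrow> bool" where
  "nontrivial_face K F \<longleftrightarrow> face K F \<and> F \<noteq> {0} \<and> F \<noteq> K"

definition cone_preserving :: "(real^'n) set \<Rightarrow> real^'n^'n \<Rightarrow> bool" where
  "cone_preserving K A \<longleftrightarrow> (\<forall>x\<in>K. A *v x \<in> K)"

definition K_irreducible :: "(real^'n) set \<Rightarrow> real^'n^'n \<Rightarrow> bool" where
  "K_irreducible K A \<longleftrightarrow> cone_preserving K A \<and>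
     \<not> (\<exists>F. nontrivial_face K F \<and> (\<forall>x\<in>F. A *v x \<in> F))"

definition exp_K_nonneg :: "(real^'n) set \<Rightarrow> real^'n^'n \<Rightarrow> bool" where
  "exp_K_nonneg K A \<longleftrightarrow> (\<forall>t\<ge>0. cone_preserving K (mexp (t *\<^sub>R A)))"

end

theory Submission
  imports Defs "HOL-Computational_Algebra.Polynomial"
    "HOL-Computational_Algebra.Fundamental_Theorem_Algebra"
begin

text \<open>
  If A leaves the span of a nontrivial face F invariant, so does every e^{tA}, which therefore maps
  F into K \<inter> span F = F; so irreducibility of some e^{tA} excludes such faces.  Conversely, an
  eigenvector x \<in> \<partial>K of A makes the face generated by x invariant under all e^{tA}, and
  differentiating at t = 0 shows that its span is A-invariant.

  For the discreteness of the exceptional times, suppose e^{tA} (t > 0) leaves a nontrivial face F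
  invariant.  The closed pointed cone cl F \<subseteq> \<partial>K then contains an eigenvector x of e^{tA}
  (Krein-Rutman, via Brouwer's fixed point theorem).  If x is not an eigenvector of A, the minimal
  polynomial of x with respect to A has two roots \<nu> \<noteq> \<nu>' with e^{t\<nu>} = e^{t\<nu>'}.  So t(\<nu> - \<nu>') \<in> 2\<pi>i\<int>
  for two distinct eigenvalues of A, which leaves only finitely many t in every bounded interval.
\<close>

section \<open>The matrix exponential\<close>

lemma matpow_scaleR: "matpow (t *\<^sub>R M) k = t ^ k *\<^sub>R matpow M k"
  by (induction k) (auto simp: scalar_matrix_assoc[symmetric] matrix_scalar_ac)

lemma matpow_commute:
  assumes "A ** M = M ** A"
  shows "A ** matpow M k = matpow M k ** A"
proof (induction k)
  case (Suc k)
  have "A ** matpow M (Suc k) = M ** (A ** matpow M k)"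
    by (simp add: assms matrix_mul_assoc)
  then show ?case by (simp add: Suc matrix_mul_assoc)
qed simp

lemma norm_matpow_mult_vec_le:
  fixes M :: "real^'n^'n"
  shows "norm (matpow M k *v v) \<le> onorm ((*v) M) ^ k * norm v"
proof (induction k)
  case (Suc k)
  have "norm (matpow M (Suc k) *v v) \<le> onorm ((*v) M) * norm (matpow M k *v v)"
    using onorm[OF matrix_vector_mul_bounded_linear, of M "matpow M k *v v"]
    by (simp add: matrix_vector_mul_assoc)
  also have "\<dots> \<le> onorm ((*v) M) * (onorm ((*v) M) ^ k * norm v)"
    using Suc by (intro mult_left_mono) (auto intro: onorm_pos_le)
  finally show ?case by (simp add: mult.assoc)
qed simp

lemma norm_matrix_le_entry_bound:
  fixes M :: "real^'n^'m"
  assumes "\<And>i j. \<bar>M $ i $ j\<bar> \<le> c"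
  shows "norm M \<le> real CARD('m) * real CARD('n) * c"
proof -
  have "norm M \<le> (\<Sum>i\<in>UNIV. norm (M $ i))"
    by (simp add: norm_vec_def L2_set_le_sum)
  also have "\<dots> \<le> (\<Sum>i\<in>(UNIV::'m set). \<Sum>j\<in>(UNIV::'n set). c)"
    using order_trans[OF norm_le_l1_cart sum_mono[OF assms]] by (intro sum_mono)
  finally show ?thesis by simp
qed

lemma summable_mexp:
  fixes M :: "real^'n^'n"
  shows "summable (\<lambda>k. (1 / fact k) *\<^sub>R matpow M k)"
proof (rule summable_comparison_test)
  let ?c = "onorm ((*v) M)"
  have "\<bar>matpow M k $ i $ j\<bar> \<le> ?c ^ k" for k i j
  proof -
    have "onorm ((*v) (matpow M k)) \<le> ?c ^ k"
      by (rule onorm_le) (rule norm_matpow_mult_vec_le)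
    then show ?thesis using matrix_component_le_onorm order_trans by blast
  qed
  then have "norm (matpow M k) \<le> real CARD('n) * real CARD('n) * ?c ^ k" for k
    by (rule norm_matrix_le_entry_bound)
  then show "\<exists>N. \<forall>k\<ge>N. norm ((1 / fact k) *\<^sub>R matpow M k)
      \<le> real CARD('n) * real CARD('n) * (?c ^ k /\<^sub>R fact k)"
    by (auto simp: divide_simps mult_ac)
  show "summable (\<lambda>k. real CARD('n) * real CARD('n) * (?c ^ k /\<^sub>R fact k))"
    by (intro summable_mult sums_summable[OF exp_converges])
qed

lemma mexp_sums: "(\<lambda>k. (1 / fact k) *\<^sub>R matpow M k) sums mexp M"
  unfolding mexp_def by (rule summable_sums[OF summable_mexp])

lemma bounded_linear_matrix_mult_vec_left: "bounded_linear (\<lambda>X::real^'n^'m. X *v v)"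
  unfolding linear_conv_bounded_linear[symmetric]
  by (auto simp: linear_iff matrix_vector_mult_add_rdistrib scaleR_matrix_vector_assoc)

lemma bounded_linear_matrix_mult_left: "bounded_linear (\<lambda>X::real^'n^'n. A ** X)"
  unfolding linear_conv_bounded_linear[symmetric]
  by (auto simp: linear_iff matrix_add_ldistrib matrix_scalar_ac scalar_matrix_assoc)

lemma bounded_linear_matrix_mult_right: "bounded_linear (\<lambda>X::real^'n^'n. X ** A)"
  unfolding linear_conv_bounded_linear[symmetric]
  by (auto simp: linear_iff matrix_matrix_mult_def vec_eq_iff sum.distrib distrib_right
      sum_distrib_left mult.assoc)

lemma mexp_mult_vec_sums:
  fixes A :: "real^'n^'n"
  shows "(\<lambda>k. (t ^ k / fact k) *\<^sub>R (matpow A k *v v)) sums (mexp (t *\<^sub>R A) *v v)"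
  using bounded_linear.sums[OF bounded_linear_matrix_mult_vec_left[of v] mexp_sums[of "t *\<^sub>R A"]]
  by (simp add: matpow_scaleR scaleR_matrix_vector_assoc)

lemma mexp_commute:
  fixes A M :: "real^'n^'n"
  assumes "A ** M = M ** A"
  shows "A ** mexp M = mexp M ** A"
proof -
  have "A ** ((1 / fact k) *\<^sub>R matpow M k) = ((1 / fact k) *\<^sub>R matpow M k) ** A" for k
  proof -
    have "A ** ((1 / fact k) *\<^sub>R matpow M k) = (1 / fact k) *\<^sub>R (A ** matpow M k)"
      by (simp only: matrix_scalar_ac scalar_matrix_assoc)
    also have "\<dots> = ((1 / fact k) *\<^sub>R matpow M k) ** A"
      by (simp only: matpow_commute[OF assms] scalar_matrix_assoc)
    finally show ?thesis .
  qed
  then show ?thesis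
    using bounded_linear.sums[OF bounded_linear_matrix_mult_left[of A] mexp_sums[of M]]
      bounded_linear.sums[OF bounded_linear_matrix_mult_right[of A] mexp_sums[of M]]
    by (simp add: sums_unique2)
qed

lemma mexp_scaleR_commute: "A ** mexp (t *\<^sub>R A) = mexp (t *\<^sub>R A) ** A"
  by (rule mexp_commute) (simp add: matrix_scalar_ac scalar_matrix_assoc)

lemma mexp_mult_eigenvector:
  fixes A :: "real^'n^'n"
  assumes "A *v x = \<mu> *\<^sub>R x"
  shows "mexp (t *\<^sub>R A) *v x = exp (t * \<mu>) *\<^sub>R x"
proof -
  have "matpow A k *v x = \<mu> ^ k *\<^sub>R x" for k
    by (induction k) (auto simp: matrix_vector_mul_assoc[symmetric] assms matrix_vector_mult_scaleR)
  then have "(\<lambda>k. (t ^ k / fact k) *\<^sub>R (matpow A k *v x)) = (\<lambda>k. ((t * \<mu>) ^ k /\<^sub>R fact k) *\<^sub>R x)"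
    by (simp add: power_mult_distrib divide_inverse mult_ac)
  then show ?thesis
    using mexp_mult_vec_sums[of t A x] bounded_linear.sums[OF bounded_linear_scaleR_left exp_converges]
    by (metis sums_unique2)
qed

lemma mexp_mult_vec_in_invariant_subspace:
  fixes A :: "real^'n^'n"
  assumes S: "subspace S" and AS: "\<And>y. y \<in> S \<Longrightarrow> A *v y \<in> S" and "x \<in> S"
  shows "mexp (t *\<^sub>R A) *v x \<in> S"
proof -
  have "matpow A k *v x \<in> S" for k
    by (induction k) (auto simp: AS \<open>x \<in> S\<close> matrix_vector_mul_assoc[symmetric])
  then have "\<forall>\<^sub>F n in sequentially. (\<Sum>k<n. (t ^ k / fact k) *\<^sub>R (matpow A k *v x)) \<in> S"
    using S by (simp add: subspace_sum subspace_scale)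
  then show ?thesis
    using mexp_mult_vec_sums[of t A x] closed_subspace[OF S]
    by (auto simp: sums_def intro: Lim_in_closed_set)
qed

lemma norm_mexp_mult_vec_remainder_le:
  fixes A :: "real^'n^'n"
  assumes t: "0 \<le> t" "t \<le> 1"
  shows "norm (mexp (t *\<^sub>R A) *v y - y - t *\<^sub>R (A *v y)) \<le> t\<^sup>2 * (exp (onorm ((*v) A)) * norm y)"
proof -
  let ?c = "onorm ((*v) A)"
  let ?a = "\<lambda>k. (t ^ k / fact k) *\<^sub>R (matpow A k *v y)"
  let ?b = "\<lambda>k. t\<^sup>2 * (?c ^ k /\<^sub>R fact k * norm y)"
  define g where "g k = (if k < 2 then 0 else ?a k)" for k
  have "(\<lambda>k. if k < 2 then ?a k else 0) sums (\<Sum>k<2. if k < 2 then ?a k else 0)"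
    by (rule sums_finite) auto
  then have "(\<lambda>k. if k < 2 then ?a k else 0) sums (y + t *\<^sub>R (A *v y))"
    by (simp add: numeral_2_eq_2)
  from sums_diff[OF mexp_mult_vec_sums[of t A y] this]
  have g_sums: "g sums (mexp (t *\<^sub>R A) *v y - y - t *\<^sub>R (A *v y))"
    by (simp add: g_def[abs_def] diff_diff_add if_distrib cong: if_cong)
  have c0: "?c \<ge> 0" by (rule onorm_pos_le) simp
  have g_le: "norm (g k) \<le> ?b k" for k
  proof (cases "k < 2")
    case False
    have "norm (g k) = t ^ k / fact k * norm (matpow A k *v y)"
      using t False by (simp add: g_def)
    also have "\<dots> \<le> t ^ k / fact k * (?c ^ k * norm y)"
      using t by (intro mult_left_mono norm_matpow_mult_vec_le) auto
    also have "\<dots> \<le> t\<^sup>2 / fact k * (?c ^ k * norm y)"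
      using t False c0 by (intro mult_right_mono divide_right_mono power_decreasing) auto
    finally show ?thesis by (simp add: divide_simps)
  qed (use c0 in \<open>simp add: g_def\<close>)
  have b_sums: "?b sums (t\<^sup>2 * (exp ?c * norm y))"
    by (intro sums_mult sums_mult2 exp_converges)
  have b_summable: "summable ?b"
    using b_sums by (rule sums_summable)
  have g_summable: "summable (\<lambda>k. norm (g k))"
    by (rule summable_comparison_test'[OF b_summable]) (use g_le in simp)
  have "norm (suminf g) \<le> (\<Sum>k. norm (g k))"
    by (rule summable_norm[OF g_summable])
  also have "\<dots> \<le> suminf ?b"
    by (rule suminf_le[OF g_le g_summable b_summable])
  finally show ?thesis
    using g_sums b_sums by (simp add: sums_iff)
qed

lemma mexp_mult_vec_right_derivative_0:
  fixes A :: "real^'n^'n"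
  shows "((\<lambda>t. (1 / t) *\<^sub>R (mexp (t *\<^sub>R A) *v y - y)) \<longlongrightarrow> A *v y) (at_right 0)"
proof -
  let ?C = "exp (onorm ((*v) A)) * norm y"
  have "norm ((1 / t) *\<^sub>R (mexp (t *\<^sub>R A) *v y - y) - A *v y) \<le> t * ?C"
    if "0 < t" "t \<le> 1" for t
  proof -
    have "(1 / t) *\<^sub>R (mexp (t *\<^sub>R A) *v y - y) - A *v y
        = (1 / t) *\<^sub>R (mexp (t *\<^sub>R A) *v y - y - t *\<^sub>R (A *v y))"
      using that by (simp add: algebra_simps)
    also have "norm \<dots> \<le> (1 / t) * (t\<^sup>2 * ?C)"
      using that norm_mexp_mult_vec_remainder_le[of t A y] by (simp add: divide_right_mono)
    finally show ?thesis using that by (simp add: power2_eq_square)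
  qed
  then have "\<forall>\<^sub>F t in at_right 0. norm ((1 / t) *\<^sub>R (mexp (t *\<^sub>R A) *v y - y) - A *v y) \<le> t * ?C"
    unfolding eventually_at_right_field by (intro exI[of _ 1]) auto
  moreover have "((\<lambda>t. t * ?C) \<longlongrightarrow> 0 * ?C) (at_right 0)"
    by (intro tendsto_intros)
  ultimately have "((\<lambda>t. (1 / t) *\<^sub>R (mexp (t *\<^sub>R A) *v y - y) - A *v y) \<longlongrightarrow> 0) (at_right 0)"
    by (simp add: Lim_null_comparison)
  then show ?thesis
    by (simp add: Lim_null[symmetric])
qed

lemma span_invariant_if_mexp_invariant:
  fixes A :: "real^'n^'n"
  assumes inv: "\<And>t y. 0 < t \<Longrightarrow> y \<in> S \<Longrightarrow> mexp (t *\<^sub>R A) *v y \<in> span S"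
    and z: "z \<in> span S"
  shows "A *v z \<in> span S"
  using z
proof (induction rule: span_induct)
  case base
  show ?case
    by (auto simp: subspace_def matrix_vector_right_distrib matrix_vector_mult_scaleR
        intro: span_add span_scale span_zero)
next
  case (step y)
  have "\<forall>\<^sub>F t in at_right 0. (1 / t) *\<^sub>R (mexp (t *\<^sub>R A) *v y - y) \<in> span S"
    unfolding eventually_at_right_field
    using inv step by (intro exI[of _ 1]) (auto intro: span_diff span_scale span_base)
  then show ?case
    by (rule Lim_in_closed_set[OF closed_subspace[OF subspace_span] _
          trivial_limit_at_right_real mexp_mult_vec_right_derivative_0])
qed

section \<open>Eigenvectors in closed pointed cones\<close>

lemma closed_cone_contains_0:
  assumes "is_cone C" "closed C"
  shows "0 \<in> C"
proof -
  obtain x where "x \<in> C" using assms(1) unfolding is_cone_def by auto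
  then have "\<forall>\<^sub>F r in at_right (0::real). r *\<^sub>R x \<in> C"
    using assms(1) unfolding is_cone_def eventually_at_right_field by (intro exI[of _ 1]) auto
  moreover have "((\<lambda>r. r *\<^sub>R x) \<longlongrightarrow> 0 *\<^sub>R x) (at_right (0::real))"
    by (intro tendsto_intros)
  ultimately show ?thesis
    using Lim_in_closed_set[OF assms(2)] by fastforce
qed

lemma convex_cone_add:
  assumes "is_cone C" "convex C" "x \<in> C" "y \<in> C"
  shows "x + y \<in> C"
proof -
  have "(1/2) *\<^sub>R x + (1/2) *\<^sub>R y \<in> C" using assms(2-4) by (rule convexD) auto
  then have "2 *\<^sub>R ((1/2) *\<^sub>R x + (1/2) *\<^sub>R y) \<in> C"
    using assms(1) unfolding is_cone_def by auto
  then show ?thesis by (simp add: scaleR_add_right)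
qed

lemma cone_scaleR_nonneg:
  assumes "is_cone C" "0 \<in> C" "0 \<le> r" "x \<in> C"
  shows "r *\<^sub>R x \<in> C"
  using assms unfolding is_cone_def by (cases "r = 0") auto

lemma is_cone_closure:
  fixes C :: "(real^'n) set"
  assumes "is_cone C"
  shows "is_cone (closure C)"
  unfolding is_cone_def
proof (intro conjI allI impI ballI)
  show "closure C \<noteq> {}"
    using assms closure_subset unfolding is_cone_def by blast
  fix r :: real and x assume "0 < r" "x \<in> closure C"
  moreover have "(\<lambda>x. r *\<^sub>R x) ` closure C \<subseteq> closure C"
    using assms \<open>0 < r\<close> closure_subset unfolding is_cone_def
    by (intro image_closure_subset) (auto intro: continuous_intros)
  ultimately show "r *\<^sub>R x \<in> closure C" by blast
qed

lemma perturbed_cone_eigenvector: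
  fixes M :: "real^'n^'n"
  assumes C: "closed C" "convex C" "is_cone C"
    and pointed: "\<And>x. x \<in> C \<Longrightarrow> -x \<in> C \<Longrightarrow> x = 0"
    and MC: "\<And>x. x \<in> C \<Longrightarrow> M *v x \<in> C"
    and z: "z \<in> C" "z \<noteq> 0" and e: "0 < e" "e \<le> 1"
  obtains y c where "(y, c) \<in> (C \<inter> sphere 0 1) \<times> {0..onorm ((*v) M) + norm z}"
    "M *v y + e *\<^sub>R z = c *\<^sub>R y"
proof -
  have C0: "0 \<in> C"
    using C closed_cone_contains_0 by blast
  define g where "g y = M *v y + e *\<^sub>R z" for y
  have gC: "g y \<in> C" if "y \<in> C" for y
    unfolding g_def using that C C0 z e
    by (intro convex_cone_add MC cone_scaleR_nonneg) auto
  have g_nonzero: "g y \<noteq> 0" if "y \<in> C" for y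
  proof
    assume "g y = 0"
    then have "M *v y = - (e *\<^sub>R z)"
      by (simp add: g_def eq_neg_iff_add_eq_0)
    then have "- (e *\<^sub>R z) \<in> C"
      using MC[OF that] by simp
    then show False
      using pointed[of "e *\<^sub>R z"] cone_scaleR_nonneg[OF C(3) C0, of e z] z e by auto
  qed
  let ?S = "C \<inter> cball 0 1"
  define f where "f y = (1 / norm (g y)) *\<^sub>R g y" for y
  have "continuous_on ?S f"
    unfolding f_def g_def using g_nonzero unfolding g_def by (intro continuous_intros) auto
  moreover have f_S: "f y \<in> C \<and> norm (f y) = 1" if "y \<in> C" for y
    unfolding f_def using gC[OF that] g_nonzero[OF that] C C0 by (auto intro: cone_scaleR_nonneg)
  then have "f \<in> ?S \<rightarrow> ?S" by auto
  moreover have "compact ?S" "convex ?S" "?S \<noteq> {}"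
    using C C0 by (auto intro: convex_Int)
  ultimately obtain y where y: "y \<in> ?S" "f y = y"
    using brouwer by metis
  have norm_y: "norm y = 1"
    using f_S y by force
  have "norm (g y) *\<^sub>R f y = g y"
    using g_nonzero[of y] y(1) by (simp add: f_def)
  then have eq: "g y = norm (g y) *\<^sub>R y"
    using y(2) by simp
  have "norm (g y) \<le> norm (M *v y) + norm (e *\<^sub>R z)"
    unfolding g_def by (rule norm_triangle_ineq)
  also have "\<dots> \<le> onorm ((*v) M) + norm z"
    using onorm[OF matrix_vector_mul_bounded_linear, of M y] norm_y e
      mult_left_le_one_le[of "norm z" e] by simp
  finally have "norm (g y) \<le> onorm ((*v) M) + norm z" .
  moreover have "M *v y + e *\<^sub>R z = norm (g y) *\<^sub>R y"
    using eq by (simp only: g_def)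
  ultimately show ?thesis
    using y(1) norm_y by (intro that[of y "norm (g y)"]) auto
qed

lemma cone_eigenvector_exists:
  fixes M :: "real^'n^'n"
  assumes C: "closed C" "convex C" "is_cone C"
    and pointed: "\<And>x. x \<in> C \<Longrightarrow> -x \<in> C \<Longrightarrow> x = 0"
    and MC: "\<And>x. x \<in> C \<Longrightarrow> M *v x \<in> C"
    and z: "z \<in> C" "z \<noteq> 0"
  obtains x \<rho> where "x \<in> C" "x \<noteq> 0" "M *v x = \<rho> *\<^sub>R x"
proof -
  let ?L = "onorm ((*v) M) + norm z"
  define e where "e m = 1 / real (Suc m)" for m
  have e: "0 < e m" "e m \<le> 1" for m
    by (auto simp: e_def)
  let ?T = "(C \<inter> sphere 0 1) \<times> {0..?L}"
  have "\<forall>m. \<exists>p. p \<in> ?T \<and> M *v fst p + e m *\<^sub>R z = snd p *\<^sub>R fst p"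
  proof
    fix m
    obtain y c where "(y, c) \<in> ?T" "M *v y + e m *\<^sub>R z = c *\<^sub>R y"
      by (rule perturbed_cone_eigenvector[OF C pointed MC z e])
    then show "\<exists>p. p \<in> ?T \<and> M *v fst p + e m *\<^sub>R z = snd p *\<^sub>R fst p"
      by (intro exI[of _ "(y, c)"]) simp
  qed
  then obtain P where "\<forall>m. P m \<in> ?T \<and> M *v fst (P m) + e m *\<^sub>R z = snd (P m) *\<^sub>R fst (P m)"
    by (rule choice[THEN exE])
  then have P: "\<And>m. P m \<in> ?T"
    and eq: "\<And>m. M *v fst (P m) + e m *\<^sub>R z = snd (P m) *\<^sub>R fst (P m)"
    by blast+
  have compact: "compact ?T"
    using C(1) by (intro compact_Times compact_Icc closed_Int_compact compact_sphere)
  obtain l r where l: "l \<in> ?T" "strict_mono r" "(P \<circ> r) \<longlonglongrightarrow> l"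
    using seq_compactE[OF compact_imp_seq_compact[OF compact], of P] P by blast
  obtain x \<rho> where l_eq: "l = (x, \<rho>)"
    by (cases l)
  have x_lim: "(\<lambda>m. fst (P (r m))) \<longlonglongrightarrow> x" and \<rho>_lim: "(\<lambda>m. snd (P (r m))) \<longlonglongrightarrow> \<rho>"
    using tendsto_fst[OF l(3)] tendsto_snd[OF l(3)] by (simp_all add: l_eq o_def)
  have e_lim: "(\<lambda>m. e (r m)) \<longlonglongrightarrow> 0"
    using LIMSEQ_subseq_LIMSEQ[OF LIMSEQ_inverse_real_of_nat l(2)]
    by (simp add: e_def o_def inverse_eq_divide)
  have "(\<lambda>m. M *v fst (P (r m)) + e (r m) *\<^sub>R z) \<longlonglongrightarrow> M *v x + 0 *\<^sub>R z"
    by (intro tendsto_intros x_lim e_lim bounded_linear.tendsto[OF matrix_vector_mul_bounded_linear])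
  moreover have "(\<lambda>m. snd (P (r m)) *\<^sub>R fst (P (r m))) \<longlonglongrightarrow> \<rho> *\<^sub>R x"
    by (intro tendsto_intros x_lim \<rho>_lim)
  ultimately have "M *v x = \<rho> *\<^sub>R x"
    using eq LIMSEQ_unique by fastforce
  moreover have "x \<in> C" "x \<noteq> 0"
    using l(1) l_eq by auto
  ultimately show ?thesis using that by blast
qed

section \<open>Polynomials in a matrix and its complexification\<close>

definition poly_mat :: "real poly \<Rightarrow> real^'n^'n \<Rightarrow> real^'n^'n" where
  "poly_mat q A = (\<Sum>i\<le>degree q. coeff q i *\<^sub>R matpow A i)"

lemma poly_mat_upto:
  assumes "degree q \<le> N"
  shows "poly_mat q A = (\<Sum>i\<le>N. coeff q i *\<^sub>R matpow A i)"
  unfolding poly_mat_def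
  by (rule sum.mono_neutral_left) (use assms in \<open>auto simp: coeff_eq_0\<close>)

lemma poly_mat_add: "poly_mat (q + r) A = poly_mat q A + poly_mat r A"
proof -
  let ?N = "max (degree q) (degree r)"
  have "poly_mat (q + r) A = (\<Sum>i\<le>?N. coeff (q + r) i *\<^sub>R matpow A i)"
    by (rule poly_mat_upto) (simp add: degree_add_le)
  also have "\<dots> = poly_mat q A + poly_mat r A"
    by (simp add: poly_mat_upto[of _ ?N] scaleR_add_left sum.distrib)
  finally show ?thesis .
qed

lemma poly_mat_diff: "poly_mat (q - r) A = poly_mat q A - poly_mat r A"
proof -
  let ?N = "max (degree q) (degree r)"
  have "poly_mat (q - r) A = (\<Sum>i\<le>?N. coeff (q - r) i *\<^sub>R matpow A i)"
    by (rule poly_mat_upto) (simp add: degree_diff_le)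
  also have "\<dots> = poly_mat q A - poly_mat r A"
    by (simp add: poly_mat_upto[of _ ?N] scaleR_diff_left sum_subtractf)
  finally show ?thesis .
qed

lemma poly_mat_smult: "poly_mat (smult c q) A = c *\<^sub>R poly_mat q A"
proof -
  have "poly_mat (smult c q) A = (\<Sum>i\<le>degree q. coeff (smult c q) i *\<^sub>R matpow A i)"
    by (rule poly_mat_upto) (rule degree_smult_le)
  then show ?thesis
    by (simp add: poly_mat_def scaleR_sum_right)
qed

lemma poly_mat_monom: "poly_mat (monom c k) A = c *\<^sub>R matpow A k"
proof -
  have "poly_mat (monom c k) A = (\<Sum>i\<le>k. coeff (monom c k) i *\<^sub>R matpow A i)"
    by (rule poly_mat_upto) (rule degree_monom_le)
  also have "\<dots> = (\<Sum>i\<le>k. if i = k then c *\<^sub>R matpow A i else 0)"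
    by (intro sum.cong) (auto simp: coeff_monom)
  finally show ?thesis by simp
qed

lemma matpow_in_span_lower_powers:
  fixes A :: "real^'n^'n"
  shows "\<exists>k. matpow A k \<in> span (matpow A ` {..<k})"
proof (rule ccontr)
  assume none: "\<nexists>k. matpow A k \<in> span (matpow A ` {..<k})"
  have "independent (matpow A ` {..<k}) \<and> card (matpow A ` {..<k}) = k" for k
  proof (induction k)
    case (Suc k)
    have new: "matpow A k \<notin> span (matpow A ` {..<k})"
      using none by blast
    then have "matpow A k \<notin> matpow A ` {..<k}"
      by (rule contrapos_nn) (rule span_base)
    then have "card (insert (matpow A k) (matpow A ` {..<k})) = Suc k"
      using Suc by simp
    moreover have "independent (insert (matpow A k) (matpow A ` {..<k}))"
      using independent_insertI[OF new] Suc by blast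
    ultimately show ?case
      by (simp add: lessThan_Suc)
  qed (simp add: independent_empty)
  then show False
    using independent_bound[of "matpow A ` {..<Suc DIM(real^'n^'n)}"] by simp
qed

lemma span_matpow_lessThan_subset:
  "span (matpow A ` {..<k}) \<subseteq> {poly_mat r A |r. coeff r k = 0 \<and> degree r \<le> k}"
  (is "_ \<subseteq> ?T")
proof (rule span_minimal)
  show "matpow A ` {..<k} \<subseteq> ?T"
  proof
    fix M assume "M \<in> matpow A ` {..<k}"
    then obtain i where "i < k" "M = matpow A i" by auto
    then show "M \<in> ?T"
      using poly_mat_monom[of 1 i A]
      by (intro CollectI exI[of _ "monom 1 i"]) (simp add: degree_monom_eq)
  qed
  show "subspace ?T"
  proof (rule subspaceI)
    show "0 \<in> ?T"
      by (rule CollectI, rule exI[of _ 0]) (simp add: poly_mat_def)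
    show "x + y \<in> ?T" if xy: "x \<in> ?T" "y \<in> ?T" for x y
    proof -
      obtain r s where "x = poly_mat r A" "coeff r k = 0" "degree r \<le> k"
        "y = poly_mat s A" "coeff s k = 0" "degree s \<le> k"
        using xy by blast
      then show ?thesis
        by (intro CollectI exI[of _ "r + s"]) (simp add: poly_mat_add degree_add_le)
    qed
    show "c *\<^sub>R x \<in> ?T" if x: "x \<in> ?T" for c x
    proof -
      obtain r where "x = poly_mat r A" "coeff r k = 0" "degree r \<le> k"
        using x by blast
      then show ?thesis
        using degree_smult_le[of c r]
        by (intro CollectI exI[of _ "smult c r"]) (simp add: poly_mat_smult)
    qed
  qed
qed

lemma exists_annihilating_poly:
  fixes A :: "real^'n^'n"
  obtains q where "q \<noteq> 0" "poly_mat q A = 0"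
proof -
  obtain k where "matpow A k \<in> span (matpow A ` {..<k})"
    using matpow_in_span_lower_powers by blast
  then obtain r where r: "coeff r k = 0" "matpow A k = poly_mat r A"
    using span_matpow_lessThan_subset by blast
  show ?thesis
  proof
    show "monom 1 k - r \<noteq> 0"
      using r(1) by (metis coeff_diff coeff_monom diff_zero one_neq_zero right_minus_eq)
    show "poly_mat (monom 1 k - r) A = 0"
      using r(2) by (simp add: poly_mat_diff poly_mat_monom)
  qed
qed

definition cvec :: "real^'n \<Rightarrow> complex^'n" where
  "cvec x = (\<chi> i. complex_of_real (x $ i))"

definition cmat :: "real^'m^'k \<Rightarrow> complex^'m^'k" where
  "cmat M = (\<chi> i j. complex_of_real (M $ i $ j))"

lemma cmat_mult: "cmat (M ** N) = cmat M ** cmat N"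
  by (simp add: cmat_def vec_eq_iff matrix_matrix_mult_def)

lemma cmat_mult_cvec: "cmat M *v cvec x = cvec (M *v x)"
  by (simp add: cmat_def cvec_def vec_eq_iff matrix_vector_mult_def)

lemma cvec_eq_0_iff: "cvec x = 0 \<longleftrightarrow> x = 0"
  by (simp add: cvec_def vec_eq_iff)

lemma scaleR_eq_smult_of_real: "r *\<^sub>R w = complex_of_real r *s (w :: complex^'n)"
  by (simp add: vec_eq_iff scaleR_conv_of_real[where 'a=complex])

lemma linear_cmat_mult_vec: "linear (\<lambda>X::real^'m^'k. cmat X *v w)"
  by (auto simp: linear_iff cmat_def vec_eq_iff matrix_vector_mult_def sum.distrib
      distrib_right scaleR_conv_of_real[where 'a=complex] sum_distrib_left mult.assoc)

lemma bounded_linear_smult_vec: "bounded_linear (\<lambda>c::complex. c *s (w::complex^'n))"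
  unfolding linear_conv_bounded_linear[symmetric]
  by (auto simp: linear_iff vec_eq_iff scaleR_conv_of_real[where 'a=complex] distrib_right)

lemma real_eigenvalue_of_cvec:
  assumes "cmat A *v cvec x = \<nu> *s cvec x"
  shows "A *v x = Re \<nu> *\<^sub>R x"
proof -
  have "complex_of_real ((A *v x) $ i) = \<nu> * complex_of_real (x $ i)" for i
    using assms by (simp add: cmat_mult_cvec vec_eq_iff) (simp add: cvec_def)
  then have "Re (complex_of_real ((A *v x) $ i)) = Re (\<nu> * complex_of_real (x $ i))" for i
    by (rule arg_cong)
  then have "(A *v x) $ i = Re \<nu> * x $ i" for i
    by simp
  then show ?thesis by (simp add: vec_eq_iff)
qed

definition poly_mat_apply :: "real^'n^'n \<Rightarrow> complex poly \<Rightarrow> complex^'n \<Rightarrow> complex^'n" where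
  "poly_mat_apply A p w = (\<Sum>i\<le>degree p. coeff p i *s (cmat (matpow A i) *v w))"

lemma poly_mat_apply_upto:
  assumes "degree p \<le> N"
  shows "poly_mat_apply A p w = (\<Sum>i\<le>N. coeff p i *s (cmat (matpow A i) *v w))"
  unfolding poly_mat_apply_def
  by (rule sum.mono_neutral_left) (use assms in \<open>auto simp: coeff_eq_0\<close>)

lemma poly_mat_apply_of_real:
  "poly_mat_apply A (map_poly complex_of_real q) w = cmat (poly_mat q A) *v w"
  by (simp add: poly_mat_apply_def poly_mat_def degree_map_poly coeff_map_poly
      linear_sum[OF linear_cmat_mult_vec] linear_scale[OF linear_cmat_mult_vec]
      scaleR_eq_smult_of_real o_def)

lemma poly_mat_apply_add: "poly_mat_apply A (p + q) w = poly_mat_apply A p w + poly_mat_apply A q w"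
proof -
  let ?N = "max (degree p) (degree q)"
  have "poly_mat_apply A (p + q) w = (\<Sum>i\<le>?N. coeff (p + q) i *s (cmat (matpow A i) *v w))"
    by (rule poly_mat_apply_upto) (simp add: degree_add_le)
  also have "\<dots> = poly_mat_apply A p w + poly_mat_apply A q w"
    by (simp add: poly_mat_apply_upto[of _ ?N] sum.distrib)
  finally show ?thesis .
qed

lemma poly_mat_apply_smult: "poly_mat_apply A (smult c p) w = c *s poly_mat_apply A p w"
proof -
  have "poly_mat_apply A (smult c p) w = (\<Sum>i\<le>degree p. coeff (smult c p) i *s (cmat (matpow A i) *v w))"
    by (rule poly_mat_apply_upto) (rule degree_smult_le)
  then show ?thesis
    by (simp add: poly_mat_apply_def sum_distrib_left vec_eq_iff mult.assoc)
qed

lemma poly_mat_apply_pCons_0: "poly_mat_apply A (pCons 0 p) w = cmat A *v poly_mat_apply A p w"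
proof -
  have "poly_mat_apply A (pCons 0 p) w
      = (\<Sum>i\<le>Suc (degree p). coeff (pCons 0 p) i *s (cmat (matpow A i) *v w))"
    by (rule poly_mat_apply_upto) (rule degree_pCons_le)
  also have "\<dots> = (\<Sum>i\<le>degree p. coeff p i *s (cmat (matpow A (Suc i)) *v w))"
    by (subst sum.atMost_Suc_shift) simp
  also have "\<dots> = cmat A *v poly_mat_apply A p w"
    by (simp add: poly_mat_apply_def matrix_vector_right_distrib vector_scalar_commute
        cmat_mult matrix_vector_mul_assoc linear_sum[OF matrix_vector_mul_linear])
  finally show ?thesis .
qed

lemma poly_mat_apply_linear_factor:
  "poly_mat_apply A ([:-\<nu>, 1:] * p) w = cmat A *v poly_mat_apply A p w - \<nu> *s poly_mat_apply A p w"
proof -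
  have "[:-\<nu>, 1:] * p = smult (-\<nu>) p + pCons 0 p"
    by simp
  then have "poly_mat_apply A ([:-\<nu>, 1:] * p) w
      = (-\<nu>) *s poly_mat_apply A p w + cmat A *v poly_mat_apply A p w"
    by (simp only: poly_mat_apply_add poly_mat_apply_smult poly_mat_apply_pCons_0)
  then show ?thesis
    by (simp add: vec_eq_iff)
qed

lemma cmat_mat_1: "cmat (mat 1) = mat 1"
  by (simp add: cmat_def mat_def vec_eq_iff)

lemma cmat_matpow_mult_chain:
  assumes "cmat A *v u1 = \<nu> *s u1 + u0" "cmat A *v u0 = \<nu> *s u0"
  shows "cmat (matpow A k) *v u1 = \<nu> ^ k *s u1 + (of_nat k * \<nu> ^ (k - 1)) *s u0"
proof (induction k)
  case (Suc k)
  have "cmat (matpow A (Suc k)) *v u1 = cmat A *v (\<nu> ^ k *s u1 + (of_nat k * \<nu> ^ (k - 1)) *s u0)"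
    by (simp add: cmat_mult matrix_vector_mul_assoc[symmetric] Suc)
  also have "\<dots> = \<nu> ^ k *s (\<nu> *s u1 + u0) + (of_nat k * \<nu> ^ (k - 1)) *s (\<nu> *s u0)"
    by (simp only: matrix_vector_right_distrib vector_scalar_commute assms)
  also have "\<dots> = \<nu> ^ Suc k *s u1 + (of_nat (Suc k) * \<nu> ^ (Suc k - 1)) *s u0"
    by (cases k) (auto simp: vec_eq_iff algebra_simps)
  finally show ?case .
qed (simp add: cmat_mat_1)

lemma cmat_mexp_mult_vec_sums:
  fixes A :: "real^'n^'n"
  shows "(\<lambda>k. (c ^ k / fact k) *\<^sub>R (cmat (matpow A k) *v w)) sums (cmat (mexp (c *\<^sub>R A)) *v w)"
  using bounded_linear.sums[OF linear_cmat_mult_vec[THEN linear_conv_bounded_linear[THEN iffD1]]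
      mexp_sums[of "c *\<^sub>R A"], of w]
  by (simp add: matpow_scaleR linear_scale[OF linear_cmat_mult_vec])

lemma cmat_mexp_mult_chain:
  fixes A :: "real^'n^'n"
  assumes "cmat A *v u1 = \<nu> *s u1 + u0" "cmat A *v u0 = \<nu> *s u0"
  shows "cmat (mexp (c *\<^sub>R A)) *v u1
    = exp (of_real c * \<nu>) *s u1 + (of_real c * exp (of_real c * \<nu>)) *s u0"
proof -
  define b where "b k = of_real (c ^ k / fact k) * (of_nat k * \<nu> ^ (k - 1))" for k
  have b_Suc: "b (Suc k) = of_real c * ((of_real c * \<nu>) ^ k /\<^sub>R fact k)" for k
    by (simp add: b_def scaleR_conv_of_real field_simps del: of_nat_Suc)
  have "(\<lambda>k. b (Suc k)) sums (of_real c * exp (of_real c * \<nu>))"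
    unfolding b_Suc by (rule sums_mult[OF exp_converges])
  moreover have "b 0 = 0"
    by (simp add: b_def)
  ultimately have "b sums (of_real c * exp (of_real c * \<nu>))"
    using sums_Suc_iff[of b] by simp
  then have sums: "(\<lambda>k. ((of_real c * \<nu>) ^ k /\<^sub>R fact k) *s u1 + b k *s u0)
      sums (exp (of_real c * \<nu>) *s u1 + (of_real c * exp (of_real c * \<nu>)) *s u0)"
    by (intro sums_add bounded_linear.sums[OF bounded_linear_smult_vec] exp_converges)
  have "(\<lambda>k. ((of_real c * \<nu>) ^ k /\<^sub>R fact k) *s u1 + b k *s u0)
      = (\<lambda>k. (c ^ k / fact k) *\<^sub>R (cmat (matpow A k) *v u1))"
    by (simp add: fun_eq_iff cmat_matpow_mult_chain[OF assms] vec_eq_iff vector_scalar_mult_def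
        scaleR_conv_of_real[where 'a=complex] power_mult_distrib b_def algebra_simps divide_inverse)
  with sums show ?thesis
    using sums_unique2[OF cmat_mexp_mult_vec_sums] by simp
qed

lemma cmat_mexp_mult_eigenvector:
  fixes A :: "real^'n^'n"
  assumes "cmat A *v w = \<nu> *s w"
  shows "cmat (mexp (c *\<^sub>R A)) *v w = exp (of_real c * \<nu>) *s w"
  using cmat_mexp_mult_chain[of A w \<nu> 0 c] assms by simp

lemma poly_mat_apply_eigenvector:
  assumes "cmat A *v w = \<nu> *s w"
  shows "poly_mat_apply A p w = poly p \<nu> *s w"
  using cmat_matpow_mult_chain[of A w \<nu> 0] assms
  by (simp add: poly_mat_apply_def poly_altdef vec_eq_iff sum_distrib_right mult.assoc)

lemma poly_mat_root_if_eigenvalue: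
  assumes "poly_mat q A = 0" "cmat A *v w = \<nu> *s w" "w \<noteq> 0"
  shows "poly (map_poly complex_of_real q) \<nu> = 0"
proof -
  have "poly (map_poly complex_of_real q) \<nu> *s w = cmat (poly_mat q A) *v w"
    using poly_mat_apply_eigenvector[OF assms(2)] poly_mat_apply_of_real by metis
  also have "\<dots> = 0"
    using assms(1) by (simp add: cmat_def vec_eq_iff matrix_vector_mult_def)
  finally show ?thesis using assms(3) by simp
qed

lemma poly_mat_apply_commute:
  assumes "B ** A = A ** B"
  shows "cmat B *v poly_mat_apply A p w = poly_mat_apply A p (cmat B *v w)"
  by (simp add: poly_mat_apply_def linear_sum[OF matrix_vector_mul_linear] vector_scalar_commute
      matrix_vector_mul_assoc cmat_mult[symmetric] matpow_commute[OF assms])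

lemma poly_mat_apply_scale_vec: "poly_mat_apply A p (c *s w) = c *s poly_mat_apply A p w"
  unfolding poly_mat_apply_def sum_cmul[symmetric]
  by (intro sum.cong refl) (simp only: vector_scalar_commute vector_smult_assoc mult.commute)

lemma poly_mat_apply_degree_le_1:
  assumes "degree p \<le> 1"
  shows "poly_mat_apply A p w = coeff p 0 *s w + coeff p 1 *s (cmat A *v w)"
  using poly_mat_apply_upto[OF assms] by (simp add: cmat_mat_1)

lemma annihilating_poly_degree_ge_2:
  assumes p: "p \<noteq> 0" "poly_mat_apply A p (cvec x) = 0"
    and not_eigen: "\<And>\<mu>. A *v x \<noteq> \<mu> *\<^sub>R x"
  shows "2 \<le> degree p"
proof (rule ccontr)
  assume "\<not> 2 \<le> degree p"
  then have deg: "degree p \<le> 1" by simp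
  have x: "cvec x \<noteq> 0"
    using not_eigen[of 0] by (auto simp: cvec_eq_0_iff)
  have sum0: "coeff p 0 *s cvec x + coeff p 1 *s (cmat A *v cvec x) = 0"
    using p(2) unfolding poly_mat_apply_degree_le_1[OF deg] .
  show False
  proof (cases "coeff p 1 = 0")
    case True
    then have "degree p = 0"
      using deg by (metis One_nat_def le_Suc_eq le_zero_eq leading_coeff_0_iff p(1))
    then have "coeff p 0 \<noteq> 0"
      using p(1) leading_coeff_0_iff by fastforce
    then show False using sum0 True x by simp
  next
    case False
    then have "cmat A *v cvec x = (- coeff p 0 / coeff p 1) *s cvec x"
      using sum0 by (simp add: vec_eq_iff field_simps add_eq_0_iff)
    then show False
      using real_eigenvalue_of_cvec not_eigen by blast
  qed
qed

lemma exists_linear_factor: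
  fixes p :: "complex poly"
  assumes "0 < degree p"
  obtains \<nu> q where "p = [:-\<nu>, 1:] * q" "degree p = Suc (degree q)"
proof -
  obtain \<nu> where "poly p \<nu> = 0"
    using fundamental_theorem_of_algebra[of p] assms by (auto simp: constant_degree)
  then obtain q where q: "p = [:-\<nu>, 1:] * q"
    by (meson dvdE poly_eq_0_iff_dvd)
  then have "q \<noteq> 0" using assms by auto
  then have "degree p = Suc (degree q)"
    using q degree_mult_eq[of "[:-\<nu>, 1:]" q] by simp
  then show ?thesis using that q by blast
qed

lemma exists_two_linear_factors:
  fixes p :: "complex poly"
  assumes "2 \<le> degree p"
  obtains \<nu>0 \<nu>1 s where "s \<noteq> 0" "p = [:-\<nu>0, 1:] * ([:-\<nu>1, 1:] * s)"
    "degree p = Suc (Suc (degree s))"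
proof -
  obtain \<nu>0 q where q: "p = [:-\<nu>0, 1:] * q" "degree p = Suc (degree q)"
    using exists_linear_factor assms by (metis less_le_trans zero_less_numeral)
  then obtain \<nu>1 s where s: "q = [:-\<nu>1, 1:] * s" "degree q = Suc (degree s)"
    using exists_linear_factor assms by (metis Suc_le_mono numeral_2_eq_2 zero_less_Suc le_simps(3))
  have "s \<noteq> 0"
    using s assms q by auto
  then show ?thesis using that q s by simp
qed

lemma exists_minimal_annihilating_poly:
  fixes A :: "real^'n^'n"
  assumes "q \<noteq> 0" "poly_mat q A = 0"
  obtains p where "p \<noteq> 0" "poly_mat_apply A p w = 0"
    "\<And>r. r \<noteq> 0 \<Longrightarrow> poly_mat_apply A r w = 0 \<Longrightarrow> degree p \<le> degree r"
proof -
  let ?annihilates = "\<lambda>r. r \<noteq> 0 \<and> poly_mat_apply A r w = 0"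
  have "map_poly complex_of_real q \<noteq> 0"
    using assms(1) by (simp add: poly_eq_iff coeff_map_poly)
  moreover have "poly_mat_apply A (map_poly complex_of_real q) w = 0"
    using assms(2) by (simp add: poly_mat_apply_of_real cmat_def vec_eq_iff matrix_vector_mult_def)
  ultimately have "?annihilates (map_poly complex_of_real q)" by blast
  then obtain p where "?annihilates p" "\<forall>r. ?annihilates r \<longrightarrow> degree p \<le> degree r"
    using ex_has_least_nat[of ?annihilates _ degree] by blast
  then show ?thesis
    using that by blast
qed

lemma cmat_mexp_mult_poly_mat_apply:
  fixes A :: "real^'n^'n"
  assumes "mexp (c *\<^sub>R A) *v x = \<rho> *\<^sub>R x"
  shows "cmat (mexp (c *\<^sub>R A)) *v poly_mat_apply A r (cvec x)
    = complex_of_real \<rho> *s poly_mat_apply A r (cvec x)"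
proof -
  have "cmat (mexp (c *\<^sub>R A)) *v cvec x = complex_of_real \<rho> *s cvec x"
    by (simp add: cmat_mult_cvec assms) (simp add: cvec_def vec_eq_iff)
  then show ?thesis
    using poly_mat_apply_commute[OF mexp_scaleR_commute[symmetric], of c A r "cvec x"]
    by (simp add: poly_mat_apply_scale_vec)
qed

lemma resonant_eigenvalues_if_mexp_eigenvector:
  fixes A :: "real^'n^'n"
  assumes q: "q \<noteq> 0" "poly_mat q A = 0"
    and x: "mexp (c *\<^sub>R A) *v x = \<rho> *\<^sub>R x" "c \<noteq> 0"
    and not_eigen: "\<And>\<mu>. A *v x \<noteq> \<mu> *\<^sub>R x"
  obtains \<nu> \<nu>' where "poly (map_poly complex_of_real q) \<nu> = 0"
    "poly (map_poly complex_of_real q) \<nu>' = 0" "\<nu> \<noteq> \<nu>'" "exp (complex_of_real c * (\<nu> - \<nu>')) = 1"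
proof -
  let ?w = "cvec x"
  obtain p where p: "p \<noteq> 0" "poly_mat_apply A p ?w = 0"
    and p_min: "\<And>r. r \<noteq> 0 \<Longrightarrow> poly_mat_apply A r ?w = 0 \<Longrightarrow> degree p \<le> degree r"
    using exists_minimal_annihilating_poly[OF q] by blast
  obtain \<nu>0 \<nu>1 s where s: "s \<noteq> 0" and p_eq: "p = [:-\<nu>0, 1:] * ([:-\<nu>1, 1:] * s)"
    and deg_p: "degree p = Suc (Suc (degree s))"
    by (rule exists_two_linear_factors[OF annihilating_poly_degree_ge_2[OF p not_eigen]])
  have factor_apply_nonzero: "poly_mat_apply A ([:-\<nu>, 1:] * s) ?w \<noteq> 0" for \<nu>
  proof
    assume "poly_mat_apply A ([:-\<nu>, 1:] * s) ?w = 0"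
    moreover have "[:-\<nu>, 1:] * s \<noteq> 0"
      using s by (metis mult_eq_0_iff one_neq_zero pCons_eq_0_iff)
    ultimately have "degree p \<le> degree ([:-\<nu>, 1:] * s)"
      using p_min by blast
    moreover have "degree ([:-\<nu>, 1:] * s) = Suc (degree s)"
      using s degree_mult_eq[of "[:-\<nu>, 1:]" s] by simp
    ultimately show False
      using deg_p by simp
  qed
  have exp_eq: "exp (of_real c * \<nu>) = of_real \<rho>"
    if "cmat A *v poly_mat_apply A r ?w = \<nu> *s poly_mat_apply A r ?w" "poly_mat_apply A r ?w \<noteq> 0"
    for \<nu> r
    using cmat_mexp_mult_eigenvector[OF that(1), of c] cmat_mexp_mult_poly_mat_apply[OF x(1), of r]
      that(2) by simp
  define u0 where "u0 = poly_mat_apply A ([:-\<nu>1, 1:] * s) ?w"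
  define u1 where "u1 = poly_mat_apply A s ?w"
  have A_u0: "cmat A *v u0 = \<nu>0 *s u0"
    using p(2) poly_mat_apply_linear_factor[of A \<nu>0 "[:-\<nu>1, 1:] * s" ?w]
    by (simp add: p_eq u0_def)
  have A_u1: "cmat A *v u1 = \<nu>1 *s u1 + u0"
    using poly_mat_apply_linear_factor[of A \<nu>1 s ?w] by (simp add: u0_def u1_def)
  have exp_\<nu>0: "exp (of_real c * \<nu>0) = of_real \<rho>"
    using exp_eq A_u0 factor_apply_nonzero unfolding u0_def by blast
  show ?thesis
  proof (cases "\<nu>0 = \<nu>1")
    case True
    \<comment> \<open>a double root is impossible: e^{cA} is not diagonal on the Jordan chain u1, u0\<close>
    have "cmat (mexp (c *\<^sub>R A)) *v u1
        = exp (of_real c * \<nu>0) *s u1 + (of_real c * exp (of_real c * \<nu>0)) *s u0"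
      using cmat_mexp_mult_chain[OF _ A_u0] A_u1 True by simp
    then have "(of_real c * exp (of_real c * \<nu>0)) *s u0 = 0"
      using cmat_mexp_mult_poly_mat_apply[OF x(1), of s] exp_\<nu>0 by (simp add: u1_def)
    then show ?thesis
      using x(2) factor_apply_nonzero[of \<nu>1] by (simp add: u0_def)
  next
    case False
    define v0 where "v0 = poly_mat_apply A ([:-\<nu>0, 1:] * s) ?w"
    have "p = [:-\<nu>1, 1:] * ([:-\<nu>0, 1:] * s)"
      unfolding p_eq by (rule mult.left_commute)
    then have A_v0: "cmat A *v v0 = \<nu>1 *s v0"
      using p(2) poly_mat_apply_linear_factor[of A \<nu>1 "[:-\<nu>0, 1:] * s" ?w] by (simp add: v0_def)
    have "exp (of_real c * \<nu>1) = of_real \<rho>"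
      using exp_eq A_v0 factor_apply_nonzero unfolding v0_def by blast
    then have "exp (of_real c * (\<nu>0 - \<nu>1)) = 1"
      using exp_\<nu>0 exp_not_eq_zero[of "of_real c * \<nu>0"] by (simp add: right_diff_distrib exp_diff)
    moreover have "poly (map_poly complex_of_real q) \<nu>0 = 0" "poly (map_poly complex_of_real q) \<nu>1 = 0"
      using poly_mat_root_if_eigenvalue[OF q(2)] A_u0 A_v0 factor_apply_nonzero
      by (auto simp: u0_def v0_def)
    ultimately show ?thesis
      using that False by blast
  qed
qed

section \<open>Resonant times\<close>

lemma finite_resonant_times:
  fixes d :: complex
  assumes "d \<noteq> 0"
  shows "finite {c::real. 0 < c \<and> c \<le> Y \<and> exp (complex_of_real c * d) = 1}"
proof -
  define N where "N = \<lceil>Y * \<bar>Im d\<bar>\<rceil>"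
  have "{c::real. 0 < c \<and> c \<le> Y \<and> exp (complex_of_real c * d) = 1}
      \<subseteq> (\<lambda>n. 2 * pi * of_int n / Im d) ` {-N..N}"
  proof
    fix c assume "c \<in> {c::real. 0 < c \<and> c \<le> Y \<and> exp (complex_of_real c * d) = 1}"
    then have c: "0 < c" "c \<le> Y" "exp (complex_of_real c * d) = 1" by auto
    then obtain n :: int where re: "Re (complex_of_real c * d) = 0"
      and im: "Im (complex_of_real c * d) = of_int (2 * n) * pi"
      unfolding exp_eq_1 by blast
    have "Re d = 0" using re c(1) by simp
    then have Im_d: "Im d \<noteq> 0" using assms complex_eq_iff by force
    have c_Im: "c * Im d = 2 * pi * of_int n"
      using im by simp
    have "\<bar>real_of_int n\<bar> \<le> \<bar>2 * pi * of_int n\<bar>"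
      using pi_gt3 by (simp add: abs_mult) (smt (verit) mult_le_cancel_right1 of_int_abs abs_ge_zero)
    also have "\<dots> = c * \<bar>Im d\<bar>"
      using c_Im c(1) by (metis abs_mult abs_of_pos)
    also have "\<dots> \<le> Y * \<bar>Im d\<bar>"
      using c by (intro mult_right_mono) auto
    finally have "\<bar>n\<bar> \<le> N"
      unfolding N_def by (metis ceiling_mono ceiling_of_int of_int_abs)
    moreover have "c = 2 * pi * of_int n / Im d"
      using c_Im Im_d by (simp add: field_simps)
    ultimately show "c \<in> (\<lambda>n. 2 * pi * of_int n / Im d) ` {-N..N}"
      by (intro image_eqI[of _ _ n]) auto
  qed
  then show ?thesis
    by (rule finite_subset) simp
qed

lemma finite_resonant_times_of_finite_spectrum:
  fixes R :: "complex set"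
  assumes "finite R"
  shows "finite {c::real. 0 < c \<and> c \<le> Y \<and>
    (\<exists>\<nu>\<in>R. \<exists>\<nu>'\<in>R. \<nu> \<noteq> \<nu>' \<and> exp (complex_of_real c * (\<nu> - \<nu>')) = 1)}"
proof -
  let ?P = "{p \<in> R \<times> R. fst p \<noteq> snd p}"
  let ?S = "\<lambda>p. {c::real. 0 < c \<and> c \<le> Y \<and> exp (complex_of_real c * (fst p - snd p)) = 1}"
  have "finite (\<Union>p\<in>?P. ?S p)"
    using assms by (intro finite_UN_I finite_resonant_times) auto
  moreover have "{c::real. 0 < c \<and> c \<le> Y \<and>
      (\<exists>\<nu>\<in>R. \<exists>\<nu>'\<in>R. \<nu> \<noteq> \<nu>' \<and> exp (complex_of_real c * (\<nu> - \<nu>')) = 1)} \<subseteq> (\<Union>p\<in>?P. ?S p)"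
  proof
    fix c assume "c \<in> {c::real. 0 < c \<and> c \<le> Y \<and>
      (\<exists>\<nu>\<in>R. \<exists>\<nu>'\<in>R. \<nu> \<noteq> \<nu>' \<and> exp (complex_of_real c * (\<nu> - \<nu>')) = 1)}"
    then obtain \<nu> \<nu>' where "\<nu> \<in> R" "\<nu>' \<in> R" "\<nu> \<noteq> \<nu>'" "c \<in> ?S (\<nu>, \<nu>')"
      by auto
    then show "c \<in> (\<Union>p\<in>?P. ?S p)"
      by (intro UN_I[of "(\<nu>, \<nu>')"]) auto
  qed
  ultimately show ?thesis
    by (rule finite_subset[rotated])
qed

lemma discrete_if_finite_Int_atMost:
  fixes T :: "real set"
  assumes fin: "\<And>Y. finite (T \<inter> {..Y})"
  shows "discrete T"
proof (rule discreteI)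
  fix t assume t: "t \<in> T"
  obtain d where d: "0 < d" "\<forall>y\<in>T \<inter> {..t + 1}. y \<noteq> t \<longrightarrow> d \<le> dist t y"
    using finite_set_avoid[OF fin[of "t + 1"], of t] by blast
  show "t isolated_in T"
    unfolding isolated_in_dist_Ex_iff
  proof (intro conjI exI[of _ "min d 1"] ballI impI)
    fix y assume y: "y \<in> T" "dist t y < min d 1"
    then have "y \<le> t + 1"
      by (simp add: dist_real_def abs_less_iff)
    with y d show "y = t" by force
  qed (use t d in auto)
qed

lemma not_discrete_if_Ioi_subset:
  fixes S :: "real set"
  assumes "{a<..} \<subseteq> S"
  shows "\<not> discrete S"
proof
  assume "discrete S"
  moreover have "a + 1 \<in> S"
    using assms by auto
  ultimately have "(a + 1) isolated_in S"
    by (rule discreteD)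
  then obtain e where e: "0 < e" "\<And>y. y \<in> S \<Longrightarrow> dist (a + 1) y < e \<Longrightarrow> y = a + 1"
    by (elim isolated_inE_dist) blast
  have "a + 1 + min e 1 / 2 \<in> S"
    using assms e(1) by (auto intro!: add_pos_pos)
  moreover have "dist (a + 1) (a + 1 + min e 1 / 2) < e"
    using e(1) by (simp add: dist_real_def)
  ultimately have "a + 1 + min e 1 / 2 = a + 1"
    by (rule e(2))
  then show False
    using e(1) by simp
qed

section \<open>Faces of a proper cone\<close>

definition generated_face :: "(real^'n) set \<Rightarrow> real^'n \<Rightarrow> (real^'n) set" where
  "generated_face K x = {y \<in> K. \<exists>l\<ge>0. l *\<^sub>R x - y \<in> K}"

lemma face_downward_closed: "face K F \<Longrightarrow> x \<in> F \<Longrightarrow> x - y \<in> K \<Longrightarrow> y \<in> K \<Longrightarrow> y \<in> F"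
  unfolding face_def by auto

context
  fixes K :: "(real^'n) set"
  assumes K: "proper_cone K"
begin

lemma proper_cone_zero: "0 \<in> K"
  using K closed_cone_contains_0 unfolding proper_cone_def by blast

lemma proper_cone_add: "x \<in> K \<Longrightarrow> y \<in> K \<Longrightarrow> x + y \<in> K"
  using K convex_cone_add unfolding proper_cone_def by blast

lemma proper_cone_scaleR: "0 \<le> r \<Longrightarrow> x \<in> K \<Longrightarrow> r *\<^sub>R x \<in> K"
  using K cone_scaleR_nonneg proper_cone_zero unfolding proper_cone_def by blast

lemma proper_cone_pointed: "x \<in> K \<Longrightarrow> -x \<in> K \<Longrightarrow> x = 0"
  using K unfolding proper_cone_def by (metis IntI image_eqI minus_minus singletonD)

lemma proper_cone_interior_scaleR:
  assumes "0 < r" "x \<in> interior K"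
  shows "r *\<^sub>R x \<in> interior K"
proof -
  have "(*\<^sub>R) r ` interior K \<subseteq> K"
    using K interior_subset assms(1) unfolding proper_cone_def is_cone_def by blast
  then have "(*\<^sub>R) r ` interior K \<subseteq> interior K"
    using assms(1) by (intro interior_maximal open_scaling) auto
  then show ?thesis using assms(2) by blast
qed

lemma proper_cone_interior_add:
  assumes "z \<in> interior K" "y \<in> K"
  shows "z + y \<in> interior K"
proof -
  obtain e where e: "0 < e" "ball z e \<subseteq> K"
    using assms(1) unfolding mem_interior by blast
  have "ball (z + y) e \<subseteq> K"
  proof
    fix w assume "w \<in> ball (z + y) e"
    then have "w - y \<in> K" using e(2) by (auto simp: dist_norm algebra_simps)
    then show "w \<in> K" using proper_cone_add[OF _ assms(2)] by fastforce
  qed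
  then show ?thesis unfolding mem_interior using e(1) by blast
qed

lemma face_zero:
  assumes "face K F"
  shows "0 \<in> F"
proof -
  obtain x where "x \<in> F"
    using assms unfolding face_def is_cone_def by auto
  then show ?thesis
    using assms proper_cone_zero unfolding face_def by auto
qed

lemma face_add: "face K F \<Longrightarrow> x \<in> F \<Longrightarrow> y \<in> F \<Longrightarrow> x + y \<in> F"
  unfolding face_def using convex_cone_add by blast

lemma face_scaleR: "face K F \<Longrightarrow> 0 \<le> r \<Longrightarrow> x \<in> F \<Longrightarrow> r *\<^sub>R x \<in> F"
  using cone_scaleR_nonneg face_zero unfolding face_def by blast

lemma span_face_subset_differences:
  assumes "face K F"
  shows "span F \<subseteq> {a - b |a b. a \<in> F \<and> b \<in> F}"
proof (rule span_minimal)
  show "F \<subseteq> {a - b |a b. a \<in> F \<and> b \<in> F}"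
    using face_zero[OF assms] by force
  show "subspace {a - b |a b. a \<in> F \<and> b \<in> F}"
  proof (rule subspaceI)
    show "0 \<in> {a - b |a b. a \<in> F \<and> b \<in> F}"
      using face_zero[OF assms] by force
  next
    fix x y assume "x \<in> {a - b |a b. a \<in> F \<and> b \<in> F}" "y \<in> {a - b |a b. a \<in> F \<and> b \<in> F}"
    then obtain a b c d where "a \<in> F" "b \<in> F" "c \<in> F" "d \<in> F" "x = a - b" "y = c - d"
      by auto
    then show "x + y \<in> {a - b |a b. a \<in> F \<and> b \<in> F}"
      by (intro CollectI exI[of _ "a + c"] exI[of _ "b + d"]) (auto intro: face_add[OF assms])
  next
    fix r :: real and x assume "x \<in> {a - b |a b. a \<in> F \<and> b \<in> F}"
    then obtain a b where ab: "a \<in> F" "b \<in> F" "x = a - b" by auto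
    show "r *\<^sub>R x \<in> {a - b |a b. a \<in> F \<and> b \<in> F}"
    proof (cases "0 \<le> r")
      case True
      then show ?thesis using ab face_scaleR[OF assms]
        by (intro CollectI exI[of _ "r *\<^sub>R a"] exI[of _ "r *\<^sub>R b"]) (simp add: scaleR_diff_right)
    next
      case False
      then have "(-r) *\<^sub>R b \<in> F" "(-r) *\<^sub>R a \<in> F"
        using ab face_scaleR[OF assms, of "-r"] by auto
      moreover have "r *\<^sub>R x = (-r) *\<^sub>R b - (-r) *\<^sub>R a"
        unfolding ab(3) by (simp add: algebra_simps)
      ultimately show ?thesis by blast
    qed
  qed
qed

lemma face_eq_Int_span:
  assumes "face K F"
  shows "F = K \<inter> span F"
proof
  show "F \<subseteq> K \<inter> span F"
    using assms span_base unfolding face_def by blast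
  show "K \<inter> span F \<subseteq> F"
  proof
    fix y assume y: "y \<in> K \<inter> span F"
    then obtain a b where ab: "a \<in> F" "b \<in> F" "y = a - b"
      using span_face_subset_differences[OF assms] by blast
    have "a - y = b" using ab(3) by simp
    then have "a - y \<in> K" using ab(2) assms unfolding face_def by auto
    then show "y \<in> F" using face_downward_closed[OF assms ab(1)] y by blast
  qed
qed

lemma face_eq_if_interior:
  assumes F: "face K F" and z: "z \<in> F" "z \<in> interior K"
  shows "F = K"
proof
  show "F \<subseteq> K" using F unfolding face_def by auto
  show "K \<subseteq> F"
  proof
    fix y assume y: "y \<in> K"
    obtain e where e: "0 < e" "ball z e \<subseteq> K"
      using z(2) unfolding mem_interior by blast
    define d where "d = e / (norm y + 1)"
    have ny: "0 < norm y + 1"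
      by (simp add: add_nonneg_pos)
    have d: "0 < d"
      using e(1) ny by (simp add: d_def)
    have "norm (d *\<^sub>R y) = e * norm y / (norm y + 1)"
      using e(1) ny by (simp add: d_def)
    also have "\<dots> < e"
      using e(1) ny by (simp add: field_simps)
    finally have "norm (d *\<^sub>R y) < e" .
    then have "z - d *\<^sub>R y \<in> K" using e(2) by (auto simp: dist_norm)
    then have "d *\<^sub>R y \<in> F"
      using face_downward_closed[OF F z(1)] proper_cone_scaleR[of d y] d y by simp
    then show "y \<in> F"
      using face_scaleR[OF F, of "1 / d" "d *\<^sub>R y"] d by simp
  qed
qed

lemma nontrivial_face_subset_frontier:
  assumes "nontrivial_face K F"
  shows "F \<subseteq> frontier K"
  using assms face_eq_if_interior closure_subset
  unfolding nontrivial_face_def frontier_def face_def by blast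

lemma face_generated_face:
  assumes x: "x \<in> K"
  shows "face K (generated_face K x)"
  unfolding face_def
proof (intro conjI allI impI)
  show "is_cone (generated_face K x)"
    unfolding is_cone_def
  proof (intro conjI allI impI ballI)
    show "generated_face K x \<noteq> {}"
      using proper_cone_zero unfolding generated_face_def by force
    fix r :: real and y assume r: "0 < r" and "y \<in> generated_face K x"
    then obtain l where l: "0 \<le> l" "l *\<^sub>R x - y \<in> K" "y \<in> K"
      unfolding generated_face_def by auto
    have "(r * l) *\<^sub>R x - r *\<^sub>R y = r *\<^sub>R (l *\<^sub>R x - y)"
      by (simp add: algebra_simps)
    then show "r *\<^sub>R y \<in> generated_face K x"
      using r l proper_cone_scaleR[of r "l *\<^sub>R x - y"] proper_cone_scaleR[of r y]
      unfolding generated_face_def by (intro CollectI conjI exI[of _ "r * l"]) auto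
  qed
  show "convex (generated_face K x)"
    unfolding convex_def
  proof (intro allI impI ballI)
    fix y z :: "real^'n" and u v :: real
    assume "y \<in> generated_face K x" "z \<in> generated_face K x" and uv: "0 \<le> u" "0 \<le> v" "u + v = 1"
    then obtain l1 l2 where l: "0 \<le> l1" "l1 *\<^sub>R x - y \<in> K" "y \<in> K"
      "0 \<le> l2" "l2 *\<^sub>R x - z \<in> K" "z \<in> K"
      unfolding generated_face_def by auto
    have "(u * l1 + v * l2) *\<^sub>R x - (u *\<^sub>R y + v *\<^sub>R z) = u *\<^sub>R (l1 *\<^sub>R x - y) + v *\<^sub>R (l2 *\<^sub>R x - z)"
      by (simp add: algebra_simps)
    then show "u *\<^sub>R y + v *\<^sub>R z \<in> generated_face K x"
      using l uv proper_cone_scaleR proper_cone_add unfolding generated_face_def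
      by (intro CollectI conjI exI[of _ "u * l1 + v * l2"]) auto
  qed
  show "generated_face K x \<subseteq> K"
    unfolding generated_face_def by auto
  fix y z assume yz: "y \<in> generated_face K x \<and> y - z \<in> K \<and> z - 0 \<in> K"
  then obtain l where l: "0 \<le> l" "l *\<^sub>R x - y \<in> K"
    unfolding generated_face_def by auto
  have "l *\<^sub>R x - z \<in> K"
    using proper_cone_add[OF l(2), of "y - z"] yz by simp
  then show "z \<in> generated_face K x"
    using l yz unfolding generated_face_def by auto
qed

lemma nontrivial_generated_face:
  assumes x: "x \<in> frontier K" "x \<noteq> 0"
  shows "nontrivial_face K (generated_face K x)"
proof -
  have xK: "x \<in> K"
    using x(1) K unfolding proper_cone_def by (simp add: frontier_def)
  have x_mem: "x \<in> generated_face K x"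
    using xK proper_cone_zero unfolding generated_face_def by (intro CollectI conjI exI[of _ 1]) auto
  have "generated_face K x \<noteq> K"
  proof
    assume eq: "generated_face K x = K"
    obtain z where z: "z \<in> interior K"
      using K unfolding proper_cone_def by auto
    then have "z \<in> generated_face K x"
      using eq interior_subset by blast
    then obtain l where l: "0 \<le> l" "l *\<^sub>R x - z \<in> K"
      unfolding generated_face_def by auto
    have "(l + 1) *\<^sub>R x = z + ((l *\<^sub>R x - z) + x)"
      by (simp add: algebra_simps)
    then have "(l + 1) *\<^sub>R x \<in> interior K"
      using proper_cone_interior_add[OF z] proper_cone_add[OF l(2) xK] by metis
    then have "x \<in> interior K"
      using proper_cone_interior_scaleR[of "1 / (l + 1)" "(l + 1) *\<^sub>R x"] l(1) by simp
    then show False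
      using x(1) l(1) by (simp add: frontier_def)
  qed
  moreover have "generated_face K x \<noteq> {0}"
    using x_mem x(2) by blast
  ultimately show ?thesis
    unfolding nontrivial_face_def using face_generated_face[OF xK] by blast
qed

lemma generated_face_invariant:
  assumes B: "cone_preserving K B" and x: "B *v x = \<rho> *\<^sub>R x" "0 \<le> \<rho>"
    and y: "y \<in> generated_face K x"
  shows "B *v y \<in> generated_face K x"
proof -
  obtain l where l: "0 \<le> l" "l *\<^sub>R x - y \<in> K" "y \<in> K"
    using y unfolding generated_face_def by auto
  have "B *v (l *\<^sub>R x - y) = (l * \<rho>) *\<^sub>R x - B *v y"
    by (simp add: matrix_vector_mult_diff_distrib matrix_vector_mult_scaleR x(1))
  then show ?thesis
    using B l x(2) unfolding generated_face_def cone_preserving_def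
    by (intro CollectI conjI exI[of _ "l * \<rho>"]) (auto simp: l(3))
qed

lemma frontier_eigenvector_if_reducible:
  assumes B: "cone_preserving K B" and red: "\<not> K_irreducible K B"
  obtains x \<rho> where "x \<in> frontier K" "x \<noteq> 0" "B *v x = \<rho> *\<^sub>R x"
proof -
  obtain F where F: "nontrivial_face K F" and BF: "\<And>x. x \<in> F \<Longrightarrow> B *v x \<in> F"
    using B red unfolding K_irreducible_def by blast
  have face: "face K F"
    using F unfolding nontrivial_face_def by blast
  obtain z where z: "z \<in> F" "z \<noteq> 0"
    using F face_zero[OF face] unfolding nontrivial_face_def by blast
  have C_frontier: "closure F \<subseteq> frontier K"
    by (rule closure_minimal[OF nontrivial_face_subset_frontier[OF F] frontier_closed])
  have C_K: "closure F \<subseteq> K"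
    using face K closure_minimal unfolding face_def proper_cone_def by blast
  have "(*v) B ` closure F \<subseteq> closure F"
    using BF closure_subset by (intro image_closure_subset linear_continuous_on) auto
  then have B_closure: "\<And>y. y \<in> closure F \<Longrightarrow> B *v y \<in> closure F"
    by blast
  have cone: "is_cone (closure F)" and convex: "convex (closure F)"
    using face by (simp_all add: face_def is_cone_closure convex_closure)
  have pointed: "\<And>y. y \<in> closure F \<Longrightarrow> -y \<in> closure F \<Longrightarrow> y = 0"
    using proper_cone_pointed C_K by blast
  obtain x \<rho> where "x \<in> closure F" "x \<noteq> 0" "B *v x = \<rho> *\<^sub>R x"
    by (rule cone_eigenvector_exists[OF closed_closure convex cone pointed B_closure
          closure_subset[THEN subsetD, OF z(1)] z(2)])
  then show ?thesis
    using that C_frontier by blast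
qed

lemma invariant_span_face_if_frontier_eigenvector:
  assumes A: "exp_K_nonneg K A" and x: "x \<in> frontier K" "x \<noteq> 0" "A *v x = \<mu> *\<^sub>R x"
  shows "\<exists>F. nontrivial_face K F \<and> (\<forall>z\<in>span F. A *v z \<in> span F)"
proof (intro exI conjI ballI)
  show "nontrivial_face K (generated_face K x)"
    by (rule nontrivial_generated_face[OF x(1,2)])
  fix z assume "z \<in> span (generated_face K x)"
  then show "A *v z \<in> span (generated_face K x)"
  proof (rule span_invariant_if_mexp_invariant[rotated])
    fix t :: real and y assume "0 < t" "y \<in> generated_face K x"
    then have "mexp (t *\<^sub>R A) *v y \<in> generated_face K x"
      using A by (intro generated_face_invariant[OF _ mexp_mult_eigenvector[OF x(3)]])
        (auto simp: exp_K_nonneg_def)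
    then show "mexp (t *\<^sub>R A) *v y \<in> span (generated_face K x)"
      by (rule span_base)
  qed
qed

lemma mexp_reducible_if_invariant_span_face:
  assumes F: "nontrivial_face K F" and AF: "\<And>z. z \<in> span F \<Longrightarrow> A *v z \<in> span F"
  shows "\<not> K_irreducible K (mexp (t *\<^sub>R A))"
proof
  assume irr: "K_irreducible K (mexp (t *\<^sub>R A))"
  have face: "face K F"
    using F unfolding nontrivial_face_def by blast
  have "mexp (t *\<^sub>R A) *v y \<in> F" if "y \<in> F" for y
  proof -
    have "mexp (t *\<^sub>R A) *v y \<in> K"
      using irr that face unfolding K_irreducible_def cone_preserving_def face_def by blast
    moreover have "mexp (t *\<^sub>R A) *v y \<in> span F"
      by (rule mexp_mult_vec_in_invariant_subspace[OF subspace_span AF span_base[OF that]])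
    ultimately show ?thesis
      using face_eq_Int_span[OF face] by blast
  qed
  then show False
    using irr F unfolding K_irreducible_def by blast
qed

lemma resonant_if_mexp_reducible:
  assumes A: "exp_K_nonneg K A"
    and no_eigen: "\<nexists>x \<mu>. x \<in> frontier K \<and> x \<noteq> 0 \<and> A *v x = \<mu> *\<^sub>R x"
    and q: "q \<noteq> 0" "poly_mat q A = 0"
    and t: "0 < t" "\<not> K_irreducible K (mexp (t *\<^sub>R A))"
  shows "\<exists>\<nu>\<in>{\<nu>. poly (map_poly complex_of_real q) \<nu> = 0}. \<exists>\<nu>'\<in>{\<nu>. poly (map_poly complex_of_real q) \<nu> = 0}.
    \<nu> \<noteq> \<nu>' \<and> exp (complex_of_real t * (\<nu> - \<nu>')) = 1"
proof -
  have "cone_preserving K (mexp (t *\<^sub>R A))"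
    using A t(1) unfolding exp_K_nonneg_def by simp
  then obtain x \<rho> where x: "x \<in> frontier K" "x \<noteq> 0" "mexp (t *\<^sub>R A) *v x = \<rho> *\<^sub>R x"
    using frontier_eigenvector_if_reducible t(2) by blast
  then have "A *v x \<noteq> \<mu> *\<^sub>R x" for \<mu>
    using no_eigen by blast
  then obtain \<nu> \<nu>' where "poly (map_poly complex_of_real q) \<nu> = 0"
    "poly (map_poly complex_of_real q) \<nu>' = 0" "\<nu> \<noteq> \<nu>'" "exp (complex_of_real t * (\<nu> - \<nu>')) = 1"
    using resonant_eigenvalues_if_mexp_eigenvector[OF q x(3)] t(1) by blast
  then show ?thesis by blast
qed

lemma discrete_reducible_times:
  assumes A: "exp_K_nonneg K A"
    and no_eigen: "\<nexists>x \<mu>. x \<in> frontier K \<and> x \<noteq> 0 \<and> A *v x = \<mu> *\<^sub>R x"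
  shows "discrete {t. 0 \<le> t \<and> \<not> K_irreducible K (mexp (t *\<^sub>R A))}"
proof (rule discrete_if_finite_Int_atMost)
  fix Y
  obtain q where q: "q \<noteq> 0" "poly_mat q A = 0"
    by (rule exists_annihilating_poly)
  let ?R = "{\<nu>. poly (map_poly complex_of_real q) \<nu> = 0}"
  let ?E = "{c. 0 < c \<and> c \<le> Y \<and>
    (\<exists>\<nu>\<in>?R. \<exists>\<nu>'\<in>?R. \<nu> \<noteq> \<nu>' \<and> exp (complex_of_real c * (\<nu> - \<nu>')) = 1)}"
  have "finite ?R"
    using q(1) by (intro poly_roots_finite) (simp add: poly_eq_iff coeff_map_poly)
  then have "finite (insert 0 ?E)"
    by (intro finite.insertI finite_resonant_times_of_finite_spectrum)
  moreover have "{t. 0 \<le> t \<and> \<not> K_irreducible K (mexp (t *\<^sub>R A))} \<inter> {..Y} \<subseteq> insert 0 ?E"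
  proof
    fix t assume t: "t \<in> {t. 0 \<le> t \<and> \<not> K_irreducible K (mexp (t *\<^sub>R A))} \<inter> {..Y}"
    show "t \<in> insert 0 ?E"
    proof (cases "t = 0")
      case False
      then show ?thesis
        using t resonant_if_mexp_reducible[OF A no_eigen q, of t] by simp
    qed simp
  qed
  ultimately show "finite ({t. 0 \<le> t \<and> \<not> K_irreducible K (mexp (t *\<^sub>R A))} \<inter> {..Y})"
    by (rule finite_subset[rotated])
qed

end

theorem mainTheorem1:
  fixes K :: "(real^'n) set" and A :: "real^'n^'n"
  assumes "proper_cone K"
    and "exp_K_nonneg K A"
  shows "((\<not> (\<exists>x \<mu>. x \<in> frontier K \<and> x \<noteq> 0 \<and> A *v x = \<mu> *\<^sub>R x))
            \<longleftrightarrow> discrete {t::real. t \<ge> 0 \<and> \<not> K_irreducible K (mexp (t *\<^sub>R A))})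
       \<and> (discrete {t::real. t \<ge> 0 \<and> \<not> K_irreducible K (mexp (t *\<^sub>R A))}
            \<longleftrightarrow> (\<exists>t>0. K_irreducible K (mexp (t *\<^sub>R A))))
       \<and> ((\<exists>t>0. K_irreducible K (mexp (t *\<^sub>R A)))
            \<longleftrightarrow> \<not> (\<exists>F. nontrivial_face K F \<and> (\<forall>x\<in>span F. A *v x \<in> span F)))"
proof -
  let ?T = "{t::real. t \<ge> 0 \<and> \<not> K_irreducible K (mexp (t *\<^sub>R A))}"
  have i_ii: "discrete ?T" if "\<nexists>x \<mu>. x \<in> frontier K \<and> x \<noteq> 0 \<and> A *v x = \<mu> *\<^sub>R x"
    using discrete_reducible_times[OF assms that] .
  have ii_iii: "\<exists>t>0. K_irreducible K (mexp (t *\<^sub>R A))" if "discrete ?T"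
  proof (rule ccontr)
    assume "\<not> (\<exists>t>0. K_irreducible K (mexp (t *\<^sub>R A)))"
    then have "{0<..} \<subseteq> ?T" by auto
    then show False
      using not_discrete_if_Ioi_subset that by blast
  qed
  have iii_iv: "\<nexists>F. nontrivial_face K F \<and> (\<forall>x\<in>span F. A *v x \<in> span F)"
    if "\<exists>t>0. K_irreducible K (mexp (t *\<^sub>R A))"
    using mexp_reducible_if_invariant_span_face[OF assms(1)] that by blast
  have iv_i: "\<nexists>x \<mu>. x \<in> frontier K \<and> x \<noteq> 0 \<and> A *v x = \<mu> *\<^sub>R x"
    if "\<nexists>F. nontrivial_face K F \<and> (\<forall>x\<in>span F. A *v x \<in> span F)"
    using invariant_span_face_if_frontier_eigenvector[OF assms] that by blast
  show ?thesis
    using i_ii ii_iii iii_iv iv_i by blast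
qed

end
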